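(* Let $p$ be a prime and $k,n$ positive integers. Then: (1) $P(p^{k+1},n)$ equals either $P(p^k,n)$ or $pP(p^k,n)$. (2) If $k\ge2$ and $P(p^{k+1},n)=pP(p^k,n)$, then $P(p^{k+2},n)=pP(p^{k+1},n)$. (3) If $P(p^{N+1},n)=pP(p^N,n)$ for some integer $N\ge2$, then $P(p^{N+k},n)=p^kP(p^N,n)$ for all positive integers $k$.
   Context: For positive integers $m,n$, let $\mathbf{Z}_m$ be the integers modulo $m$ and $T:\mathbf{Z}_m^n\to\mathbf{Z}_m^n$, $T(a_0,\dots,a_{n-1})=(a_0+a_1,a_1+a_2,\dots,a_{n-1}+a_0)$. For $\mathbf{a}\in\mathbf{Z}_m^n$ the cycle length of $(T^k\mathbf{a})_{k\ge0}$ is the smallest positive integer $P$ such that there is $N$ with $T^{k+P}\mathbf{a}=T^k\mathbf{a}$ for all $k\ge N$. $P(m,n)$ denotes the maximum of these cycle lengths over all $\mathbf{a}\in\mathbf{Z}_m^n$. *)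

theory Defs
  imports "HOL-Computational_Algebra.Primes"
begin

text \<open>Elements of Z_m^n are represented as functions nat => int with entries
  in {0..<m} at indices i < n and value 0 at indices i >= n.\<close>

definition Zvecs :: "nat \<Rightarrow> nat \<Rightarrow> (nat \<Rightarrow> int) set" where
  "Zvecs m n = {a. (\<forall>i<n. a i \<in> {0..<int m}) \<and> (\<forall>i\<ge>n. a i = 0)}"

definition Tmap :: "nat \<Rightarrow> nat \<Rightarrow> (nat \<Rightarrow> int) \<Rightarrow> (nat \<Rightarrow> int)" where
  "Tmap m n a = (\<lambda>i. if i < n then (a i + a (Suc i mod n)) mod int m else 0)"

definition cycle_len :: "nat \<Rightarrow> nat \<Rightarrow> (nat \<Rightarrow> int) \<Rightarrow> nat" where
  "cycle_len m n a = (LEAST P. P > 0 \<and> (\<exists>N. \<forall>k\<ge>N. (Tmap m n ^^ (k + P)) a = (Tmap m n ^^ k) a))"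

definition Pmax :: "nat \<Rightarrow> nat \<Rightarrow> nat" where
  "Pmax m n = Max (cycle_len m n ` Zvecs m n)"

end

theory Submission
  imports Defs "HOL-Computational_Algebra.Polynomial" "HOL-Library.FuncSet"
begin

text \<open>
  We identify Z_m^n with Z[x] modulo the ideal (m, x^n - 1): the vector a becomes the
  polynomial sum a_i x^i, and T becomes multiplication by t = 1 + x^(n-1). Every orbit is a
  multiple of the orbit of the unit vector, whose polynomials are the powers of t, so P(m,n)
  is the least eventual period of t modulo (m, x^n - 1).

  Suppose t^N w lies in (p^k, x^n - 1), where w = t^Q - 1. Since t^(pQ) - 1 = w (1 + t^Q
  + ... + t^((p-1)Q)) and the second factor is p plus a multiple of w, pQ is an eventual
  period modulo p^(k+1); as P(p^k) divides P(p^(k+1)), this gives (1). Conversely, in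
  (1 + w)^p - 1 = p w + sum_(j>=2) C(p,j) w^j all terms with j >= 2 vanish modulo p^(k+2)
  after multiplication by a power of t, as soon as k >= 2. So if pQ is an eventual period
  modulo p^(k+2), then p t^M w lies in (p^(k+2), x^n - 1), and as x^n - 1 is primitive,
  t^M w lies in (p^(k+1), x^n - 1). Hence P(p^(k+2)) = P(p^(k+1)) is impossible when
  P(p^(k+1)) = p P(p^k), which is (2); (3) follows by induction.
\<close>

section \<open>The ideal generated by two elements\<close>

definition ideal2 :: "'a::comm_ring_1 \<Rightarrow> 'a \<Rightarrow> 'a set" where
  "ideal2 a b = {a * u + b * v |u v. True}"

lemma ideal2_iff: "x \<in> ideal2 a b \<longleftrightarrow> (\<exists>u v. x = a * u + b * v)"
  by (auto simp: ideal2_def)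

lemma ideal2_zero [simp]: "0 \<in> ideal2 a b"
  unfolding ideal2_iff by (intro exI[of _ 0]) simp

lemma ideal2_add: "x \<in> ideal2 a b \<Longrightarrow> y \<in> ideal2 a b \<Longrightarrow> x + y \<in> ideal2 a b"
proof -
  assume "x \<in> ideal2 a b" "y \<in> ideal2 a b"
  then obtain u v u' v' where "x = a * u + b * v" "y = a * u' + b * v'"
    unfolding ideal2_iff by blast
  then have "x + y = a * (u + u') + b * (v + v')"
    by (simp add: algebra_simps)
  then show ?thesis unfolding ideal2_iff by blast
qed

lemma ideal2_uminus: "x \<in> ideal2 a b \<Longrightarrow> - x \<in> ideal2 a b"
proof -
  assume "x \<in> ideal2 a b"
  then obtain u v where "x = a * u + b * v"
    unfolding ideal2_iff by blast
  then have "- x = a * (- u) + b * (- v)"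
    by (simp add: algebra_simps)
  then show ?thesis unfolding ideal2_iff by blast
qed

lemma ideal2_diff: "x \<in> ideal2 a b \<Longrightarrow> y \<in> ideal2 a b \<Longrightarrow> x - y \<in> ideal2 a b"
  using ideal2_add[of x a b "- y"] ideal2_uminus[of y] by simp

lemma ideal2_mult_left: "x \<in> ideal2 a b \<Longrightarrow> y * x \<in> ideal2 a b"
proof -
  assume "x \<in> ideal2 a b"
  then obtain u v where "x = a * u + b * v"
    unfolding ideal2_iff by blast
  then have "y * x = a * (y * u) + b * (y * v)"
    by (simp add: algebra_simps)
  then show ?thesis unfolding ideal2_iff by blast
qed

lemma ideal2_mult_right: "x \<in> ideal2 a b \<Longrightarrow> x * y \<in> ideal2 a b"
  using ideal2_mult_left[of x a b y] by (simp add: mult.commute)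

lemma ideal2_sum: "(\<And>i. i \<in> A \<Longrightarrow> f i \<in> ideal2 a b) \<Longrightarrow> (\<Sum>i\<in>A. f i) \<in> ideal2 a b"
  by (induction A rule: infinite_finite_induct) (auto intro: ideal2_add)

lemma ideal2_left_multiple: "a * u \<in> ideal2 a b"
  unfolding ideal2_iff by (intro exI[of _ u] exI[of _ 0]) simp

lemma ideal2_right_multiple: "b * v \<in> ideal2 a b"
  unfolding ideal2_iff by (intro exI[of _ 0] exI[of _ v]) simp

lemma ideal2_antimono: "a dvd a' \<Longrightarrow> x \<in> ideal2 a' b \<Longrightarrow> x \<in> ideal2 a b"
proof -
  assume "a dvd a'" "x \<in> ideal2 a' b"
  then obtain k u v where "a' = a * k" "x = a' * u + b * v"
    unfolding ideal2_iff by blast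
  then have "x = a * (k * u) + b * v"
    by (simp add: algebra_simps)
  then show ?thesis unfolding ideal2_iff by blast
qed

lemma ideal2_mult: "x \<in> ideal2 a c \<Longrightarrow> y \<in> ideal2 b c \<Longrightarrow> x * y \<in> ideal2 (a * b) c"
proof -
  assume "x \<in> ideal2 a c" "y \<in> ideal2 b c"
  then obtain u v u' v' where "x = a * u + c * v" "y = b * u' + c * v'"
    unfolding ideal2_iff by blast
  then have "x * y = (a * b) * (u * u') + c * (a * u * v' + v * y)"
    by (simp add: algebra_simps)
  then show ?thesis unfolding ideal2_iff by blast
qed

lemma ideal2_power: "x \<in> ideal2 a b \<Longrightarrow> x ^ j \<in> ideal2 (a ^ j) b"
proof (induction j)
  case 0
  show ?case using ideal2_left_multiple[of 1 1 b] by simp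
next
  case (Suc j)
  then show ?case using ideal2_mult[of x a b "x ^ j" "a ^ j"] by simp
qed

lemma ideal2_cancel_const:
  fixes g :: "int poly"
  assumes "content g = 1" "c \<noteq> 0" "of_nat c * y \<in> ideal2 (of_nat c * a) g"
  shows "y \<in> ideal2 a g"
proof -
  obtain u v where uv: "of_nat c * y = of_nat c * a * u + g * v"
    using assms(3) unfolding ideal2_iff by blast
  have gv: "g * v = [:int c:] * (y - a * u)"
    using uv by (simp add: of_nat_poly[symmetric] algebra_simps)
  have "[:int c:] dvd g * v"
    unfolding gv by (rule dvd_triv_left)
  then have "int c dvd content (g * v)"
    by (simp add: const_poly_dvd_iff_dvd_content)
  then have "[:int c:] dvd v"
    by (simp add: content_mult assms(1) const_poly_dvd_iff_dvd_content)
  then obtain w where w: "v = [:int c:] * w" ..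
  have "[:int c:] * (y - a * u - g * w) = 0"
    using gv w by (simp add: algebra_simps)
  then have "y = a * u + g * w" using assms(2) by simp
  then show ?thesis unfolding ideal2_iff by blast
qed

section \<open>Eventual periods modulo an ideal\<close>

definition eventual_period :: "'a::comm_ring_1 set \<Rightarrow> 'a \<Rightarrow> nat \<Rightarrow> bool" where
  "eventual_period I t P \<longleftrightarrow> (\<exists>N. t ^ N * (t ^ P - 1) \<in> I)"

definition min_period :: "'a::comm_ring_1 set \<Rightarrow> 'a \<Rightarrow> nat" where
  "min_period I t = (LEAST P. P > 0 \<and> eventual_period I t P)"

lemma eventual_period_from:
  assumes "eventual_period (ideal2 a b) t P"
  obtains N0 where "\<And>N. N \<ge> N0 \<Longrightarrow> t ^ N * (t ^ P - 1) \<in> ideal2 a b"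
proof -
  obtain N0 where N0: "t ^ N0 * (t ^ P - 1) \<in> ideal2 a b"
    using assms unfolding eventual_period_def by blast
  have "t ^ N * (t ^ P - 1) \<in> ideal2 a b" if "N \<ge> N0" for N
  proof -
    from le_Suc_ex[OF that] obtain d where "N = N0 + d" ..
    then have "t ^ N * (t ^ P - 1) = t ^ d * (t ^ N0 * (t ^ P - 1))"
      by (simp add: power_add mult_ac)
    then show ?thesis using ideal2_mult_left[OF N0] by simp
  qed
  then show ?thesis by (rule that)
qed

lemma eventual_period_common:
  assumes "eventual_period (ideal2 a b) t P" "eventual_period (ideal2 a b) t P'"
  obtains N where "t ^ N * (t ^ P - 1) \<in> ideal2 a b" "t ^ N * (t ^ P' - 1) \<in> ideal2 a b"
proof -
  obtain N1 N2 where
    "\<And>N. N \<ge> N1 \<Longrightarrow> t ^ N * (t ^ P - 1) \<in> ideal2 a b"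
    "\<And>N. N \<ge> N2 \<Longrightarrow> t ^ N * (t ^ P' - 1) \<in> ideal2 a b"
    using eventual_period_from[OF assms(1)] eventual_period_from[OF assms(2)] by metis
  then show ?thesis using that[of "max N1 N2"] by simp
qed

lemma eventual_period_0 [simp]: "eventual_period (ideal2 a b) t 0"
  unfolding eventual_period_def by simp

lemma eventual_period_antimono:
  "a dvd a' \<Longrightarrow> eventual_period (ideal2 a' b) t P \<Longrightarrow> eventual_period (ideal2 a b) t P"
  unfolding eventual_period_def using ideal2_antimono by blast

lemma ex_eventual_period_antimono:
  "a dvd a' \<Longrightarrow> \<exists>P > 0. eventual_period (ideal2 a' b) t P \<Longrightarrow> \<exists>P > 0. eventual_period (ideal2 a b) t P"
  using eventual_period_antimono by blast

lemma eventual_period_add: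
  assumes "eventual_period (ideal2 a b) t P" "eventual_period (ideal2 a b) t P'"
  shows "eventual_period (ideal2 a b) t (P + P')"
proof -
  obtain N where N: "t ^ N * (t ^ P - 1) \<in> ideal2 a b" "t ^ N * (t ^ P' - 1) \<in> ideal2 a b"
    using eventual_period_common[OF assms] .
  have "t ^ N * (t ^ (P + P') - 1) = t ^ P * (t ^ N * (t ^ P' - 1)) + t ^ N * (t ^ P - 1)"
    by (simp add: algebra_simps power_add)
  then show ?thesis unfolding eventual_period_def
    using ideal2_add[OF ideal2_mult_left[OF N(2)] N(1)] by metis
qed

lemma eventual_period_diff:
  assumes "eventual_period (ideal2 a b) t P" "eventual_period (ideal2 a b) t P'" "P \<le> P'"
  shows "eventual_period (ideal2 a b) t (P' - P)"
proof -
  obtain N where N: "t ^ N * (t ^ P - 1) \<in> ideal2 a b" "t ^ N * (t ^ P' - 1) \<in> ideal2 a b"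
    using eventual_period_common[OF assms(1,2)] .
  have "t ^ P' = t ^ (P' - P) * t ^ P"
    using assms(3) by (simp add: power_add[symmetric])
  then have "t ^ N * (t ^ (P' - P) - 1) = t ^ N * (t ^ P' - 1) - t ^ (P' - P) * (t ^ N * (t ^ P - 1))"
    by (simp add: algebra_simps)
  then show ?thesis unfolding eventual_period_def
    using ideal2_diff[OF N(2) ideal2_mult_left[OF N(1)]] by metis
qed

lemma eventual_period_mult:
  "eventual_period (ideal2 a b) t P \<Longrightarrow> eventual_period (ideal2 a b) t (q * P)"
  by (induction q) (simp_all add: eventual_period_add)

lemma eventual_period_mod:
  assumes "eventual_period (ideal2 a b) t P" "eventual_period (ideal2 a b) t L"
  shows "eventual_period (ideal2 a b) t (P mod L)"
proof -
  have "eventual_period (ideal2 a b) t (P - P div L * L)"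
    using eventual_period_diff[OF eventual_period_mult[OF assms(2)] assms(1)]
    by (simp add: div_times_less_eq_dividend)
  then show ?thesis by (simp add: minus_div_mult_eq_mod)
qed

lemma
  assumes "\<exists>P > 0. eventual_period (ideal2 a b) t P"
  shows min_period_pos: "min_period (ideal2 a b) t > 0"
    and eventual_period_iff_min_period_dvd:
      "eventual_period (ideal2 a b) t P \<longleftrightarrow> min_period (ideal2 a b) t dvd P"
proof -
  let ?L = "min_period (ideal2 a b) t"
  have L: "?L > 0" "eventual_period (ideal2 a b) t ?L"
    using LeastI_ex[OF assms] unfolding min_period_def by auto
  then show "?L > 0" by simp
  show "eventual_period (ideal2 a b) t P \<longleftrightarrow> ?L dvd P"
  proof
    assume P: "eventual_period (ideal2 a b) t P"
    show "?L dvd P"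
    proof (rule ccontr)
      assume "\<not> ?L dvd P"
      then have "P mod ?L > 0" by (simp add: mod_greater_zero_iff_not_dvd)
      moreover have "eventual_period (ideal2 a b) t (P mod ?L)"
        using eventual_period_mod[OF P L(2)] .
      ultimately have "?L \<le> P mod ?L"
        unfolding min_period_def by (blast intro: Least_le)
      then show False using mod_less_divisor[OF L(1), of P] by simp
    qed
  next
    assume "?L dvd P"
    then show "eventual_period (ideal2 a b) t P"
      using eventual_period_mult[OF L(2)] by (auto elim!: dvdE simp: mult.commute)
  qed
qed

section \<open>Periods modulo prime powers\<close>

lemma eventual_period_lift:
  fixes g t :: "'a::comm_ring_1"
  assumes "k \<ge> 1" "eventual_period (ideal2 (of_nat p ^ k) g) t Q"
  shows "eventual_period (ideal2 (of_nat p ^ (k + 1)) g) t (p * Q)"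
proof -
  define u where "u = t ^ Q"
  obtain N where A: "t ^ N * (u - 1) \<in> ideal2 (of_nat p ^ k) g"
    using assms(2) unfolding eventual_period_def u_def by blast
  define D where "D = (\<Sum>j<p. t ^ N * (u ^ j - 1))"
  have D: "D \<in> ideal2 (of_nat p ^ k) g"
    unfolding D_def
  proof (rule ideal2_sum)
    fix j
    have "t ^ N * (u ^ j - 1) = t ^ N * (u - 1) * (\<Sum>i<j. u ^ i)"
      by (simp add: power_diff_1_eq mult.assoc)
    then show "t ^ N * (u ^ j - 1) \<in> ideal2 (of_nat p ^ k) g"
      using ideal2_mult_right[OF A] by simp
  qed
  have "t ^ (p * Q) = u ^ p"
    by (simp add: u_def power_mult[symmetric] mult.commute)
  then have "t ^ (p * Q) - 1 = (u - 1) * (\<Sum>j<p. u ^ j)"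
    by (simp add: power_diff_1_eq)
  moreover have "t ^ (2 * N) = t ^ N * t ^ N"
    by (simp add: mult_2 power_add)
  ultimately have "t ^ (2 * N) * (t ^ (p * Q) - 1) = t ^ N * (u - 1) * (\<Sum>j<p. t ^ N * u ^ j)"
    by (simp add: sum_distrib_left[symmetric] mult_ac)
  also have "(\<Sum>j<p. t ^ N * u ^ j) = of_nat p * t ^ N + D"
    by (simp add: D_def algebra_simps sum_subtractf)
  finally have key: "t ^ (2 * N) * (t ^ (p * Q) - 1)
      = (t ^ N * (u - 1) * of_nat p) * t ^ N + t ^ N * (u - 1) * D"
    by (simp add: algebra_simps)
  have "t ^ N * (u - 1) * of_nat p \<in> ideal2 (of_nat p ^ (k + 1)) g"
    using ideal2_mult[OF A ideal2_left_multiple[of "of_nat p" 1]] by (simp add: mult.commute)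
  then have scaled: "(t ^ N * (u - 1) * of_nat p) * t ^ N \<in> ideal2 (of_nat p ^ (k + 1)) g"
    by (simp add: ideal2_mult_right)
  have "of_nat p ^ (k + 1) dvd (of_nat p ^ k * of_nat p ^ k :: 'a)"
    unfolding power_add[symmetric] using assms(1) by (intro le_imp_power_dvd) simp
  then have squared: "t ^ N * (u - 1) * D \<in> ideal2 (of_nat p ^ (k + 1)) g"
    using ideal2_antimono ideal2_mult[OF A D] by blast
  show ?thesis
    unfolding eventual_period_def using ideal2_add[OF scaled squared] key by metis
qed

lemma prime_binomial_tail_in_ideal2:
  fixes x g :: "'a::comm_ring_1"
  assumes "prime p" "k \<ge> 2" "x \<in> ideal2 (of_nat p ^ k) g"
  shows "(\<Sum>j\<in>{2..p}. of_nat (p choose j) * c j * x ^ j) \<in> ideal2 (of_nat p ^ (k + 2)) g"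
proof (rule ideal2_sum)
  fix j assume j: "j \<in> {2..p}"
  have xj: "x ^ j \<in> ideal2 (of_nat p ^ (k * j)) g"
    using ideal2_power[OF assms(3), of j] by (simp add: power_mult)
  have "k * 2 \<le> k * j" using j by simp
  then have kj: "k + 2 \<le> k * j" using assms(2) by linarith
  show "of_nat (p choose j) * c j * x ^ j \<in> ideal2 (of_nat p ^ (k + 2)) g"
  proof (cases "j = p")
    case True
    have "of_nat p ^ (k + 2) dvd (of_nat p ^ (k * j) :: 'a)"
      using kj by (rule le_imp_power_dvd)
    then show ?thesis using ideal2_antimono ideal2_mult_left[OF xj] by blast
  next
    case False
    then have "p dvd (p choose j)"
      using j assms(1) by (intro dvd_choose_prime) auto
    then obtain d where "(of_nat (p choose j) :: 'a) = of_nat p * of_nat d"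
      by (auto elim!: dvdE)
    then have "of_nat (p choose j) * c j * x ^ j \<in> ideal2 (of_nat p * of_nat p ^ (k * j)) g"
      using ideal2_mult[OF ideal2_left_multiple[of "of_nat p" "of_nat d * c j"] xj]
      by (simp add: mult.assoc)
    moreover have "of_nat p ^ (k + 2) dvd (of_nat p * of_nat p ^ (k * j) :: 'a)"
      unfolding power_Suc[symmetric] using kj by (intro le_imp_power_dvd) simp
    ultimately show ?thesis using ideal2_antimono by blast
  qed
qed

lemma power_mult_binomial_expansion:
  fixes t w :: "'a::comm_ring_1"
  assumes "p \<ge> 1"
  shows "t ^ (p * N) * ((w + 1) ^ p - 1) = of_nat p * (t ^ ((p - 1) * N) * (t ^ N * w))
    + (\<Sum>j\<in>{2..p}. of_nat (p choose j) * t ^ ((p - j) * N) * (t ^ N * w) ^ j)"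
proof -
  have "(w + 1) ^ p - 1 = (\<Sum>j\<in>{1..p}. of_nat (p choose j) * w ^ j)"
    by (simp add: binomial_ring atMost_atLeast0 sum.atLeast_Suc_atMost)
  then have "t ^ (p * N) * ((w + 1) ^ p - 1) = (\<Sum>j\<in>{1..p}. t ^ (p * N) * (of_nat (p choose j) * w ^ j))"
    by (simp add: sum_distrib_left)
  also have "\<dots> = (\<Sum>j\<in>{1..p}. of_nat (p choose j) * t ^ ((p - j) * N) * (t ^ N * w) ^ j)"
  proof (rule sum.cong)
    fix j assume "j \<in> {1..p}"
    then have "p * N = (p - j) * N + N * j"
      by (simp add: diff_mult_distrib)
    then show "t ^ (p * N) * (of_nat (p choose j) * w ^ j)
        = of_nat (p choose j) * t ^ ((p - j) * N) * (t ^ N * w) ^ j"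
      by (simp add: power_mult_distrib power_mult power_add mult_ac)
  qed simp
  also have "\<dots> = of_nat p * (t ^ ((p - 1) * N) * (t ^ N * w))
      + (\<Sum>j\<in>{2..p}. of_nat (p choose j) * t ^ ((p - j) * N) * (t ^ N * w) ^ j)"
    using assms by (simp add: sum.atLeast_Suc_atMost numeral_2_eq_2)
  finally show ?thesis .
qed

lemma eventual_period_descend:
  fixes g t :: "int poly"
  assumes "prime p" "content g = 1" "k \<ge> 2"
    and "eventual_period (ideal2 (of_nat p ^ k) g) t Q"
    and "eventual_period (ideal2 (of_nat p ^ (k + 2)) g) t (p * Q)"
  shows "eventual_period (ideal2 (of_nat p ^ (k + 1)) g) t Q"
proof -
  define w where "w = t ^ Q - 1"
  obtain N1 where N1: "\<And>N. N \<ge> N1 \<Longrightarrow> t ^ N * w \<in> ideal2 (of_nat p ^ k) g"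
    using eventual_period_from[OF assms(4)] unfolding w_def by blast
  obtain N2 where N2: "\<And>N. N \<ge> N2 \<Longrightarrow> t ^ N * (t ^ (p * Q) - 1) \<in> ideal2 (of_nat p ^ (k + 2)) g"
    using eventual_period_from[OF assms(5)] by blast
  define N where "N = max N1 N2"
  have p: "p \<ge> 2" using assms(1) prime_ge_2_nat by blast
  have "t ^ (p * Q) = (w + 1) ^ p"
    by (simp add: w_def power_mult[symmetric] mult.commute)
  then have expand: "of_nat p * (t ^ ((p - 1) * N) * (t ^ N * w)) = t ^ (p * N) * (t ^ (p * Q) - 1)
      - (\<Sum>j\<in>{2..p}. of_nat (p choose j) * t ^ ((p - j) * N) * (t ^ N * w) ^ j)"
    using power_mult_binomial_expansion[of p t N w] p by simp
  have "N2 \<le> N" "N \<le> p * N"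
    using p by (simp add: N_def, simp)
  then have "t ^ (p * N) * (t ^ (p * Q) - 1) \<in> ideal2 (of_nat p ^ (k + 2)) g"
    by (intro N2) linarith
  moreover have "t ^ N * w \<in> ideal2 (of_nat p ^ k) g"
    unfolding N_def by (rule N1) simp
  ultimately have "of_nat p * (t ^ ((p - 1) * N) * (t ^ N * w)) \<in> ideal2 (of_nat p ^ (k + 2)) g"
    unfolding expand by (intro ideal2_diff prime_binomial_tail_in_ideal2 assms(1,3))
  then have "t ^ ((p - 1) * N) * (t ^ N * w) \<in> ideal2 (of_nat p ^ (k + 1)) g"
    using ideal2_cancel_const[OF assms(2), of p] p by simp
  moreover have "t ^ ((p - 1) * N) * (t ^ N * w) = t ^ (p * N) * w"
    using p by (simp add: mult.assoc power_add[symmetric] diff_mult_distrib)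
  ultimately show ?thesis
    unfolding eventual_period_def w_def by metis
qed

lemma min_period_Suc_cases:
  fixes g t :: "'a::comm_ring_1"
  assumes "prime p" "k \<ge> 1" "\<exists>P > 0. eventual_period (ideal2 (of_nat p ^ (k + 1)) g) t P"
  shows "min_period (ideal2 (of_nat p ^ (k + 1)) g) t = min_period (ideal2 (of_nat p ^ k) g) t
    \<or> min_period (ideal2 (of_nat p ^ (k + 1)) g) t = p * min_period (ideal2 (of_nat p ^ k) g) t"
proof -
  let ?I = "\<lambda>k. ideal2 (of_nat p ^ k) g"
  let ?L = "min_period (?I k) t" and ?L' = "min_period (?I (k + 1)) t"
  have dvd_Suc: "of_nat p ^ k dvd (of_nat p ^ (k + 1) :: 'a)"
    by (simp add: le_imp_power_dvd)
  have ex: "\<exists>P > 0. eventual_period (?I k) t P"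
    using ex_eventual_period_antimono[OF dvd_Suc assms(3)] .
  have L: "eventual_period (?I k) t ?L" "?L > 0"
    using eventual_period_iff_min_period_dvd[OF ex] min_period_pos[OF ex] by auto
  have "eventual_period (?I (k + 1)) t ?L'"
    using eventual_period_iff_min_period_dvd[OF assms(3)] by simp
  then have "?L dvd ?L'"
    using eventual_period_antimono[OF dvd_Suc] eventual_period_iff_min_period_dvd[OF ex] by blast
  then obtain d where d: "?L' = ?L * d" ..
  have "eventual_period (?I (k + 1)) t (p * ?L)"
    using eventual_period_lift[OF assms(2) L(1)] .
  then have "?L * d dvd ?L * p"
    using eventual_period_iff_min_period_dvd[OF assms(3)] d by (simp add: mult.commute)
  then have "d dvd p" using L(2) by simp
  then have "d = 1 \<or> d = p" using assms(1) by (simp add: prime_nat_iff)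
  then show ?thesis using d by auto
qed

lemma min_period_Suc_Suc:
  fixes g t :: "int poly"
  assumes "prime p" "content g = 1" "k \<ge> 2"
    and ex2: "\<exists>P > 0. eventual_period (ideal2 (of_nat p ^ (k + 2)) g) t P"
    and step: "min_period (ideal2 (of_nat p ^ (k + 1)) g) t = p * min_period (ideal2 (of_nat p ^ k) g) t"
  shows "min_period (ideal2 (of_nat p ^ (k + 2)) g) t = p * min_period (ideal2 (of_nat p ^ (k + 1)) g) t"
proof (rule ccontr)
  let ?I = "\<lambda>k. ideal2 (of_nat p ^ k) g"
  let ?Q = "\<lambda>j. min_period (?I j) t"
  have ex1: "\<exists>P > 0. eventual_period (?I (k + 1)) t P"
    and ex0: "\<exists>P > 0. eventual_period (?I k) t P"
    by (rule ex_eventual_period_antimono[OF le_imp_power_dvd ex2], simp)+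
  have k2: "k + 1 + 1 = k + 2" by simp
  assume "?Q (k + 2) \<noteq> p * ?Q (k + 1)"
  then have "?Q (k + 2) = ?Q (k + 1)"
    using min_period_Suc_cases[OF assms(1) le_add2 ex2[folded k2], unfolded k2] by blast
  then have "eventual_period (?I (k + 2)) t (p * ?Q k)"
    unfolding eventual_period_iff_min_period_dvd[OF ex2] using step by simp
  moreover have "eventual_period (?I k) t (?Q k)"
    unfolding eventual_period_iff_min_period_dvd[OF ex0] by simp
  ultimately have "eventual_period (?I (k + 1)) t (?Q k)"
    using eventual_period_descend[OF assms(1-3)] by blast
  then have "p * ?Q k dvd 1 * ?Q k"
    using step unfolding eventual_period_iff_min_period_dvd[OF ex1] by simp
  then have "p * ?Q k \<le> 1 * ?Q k"
    using min_period_pos[OF ex0] by (intro dvd_imp_le) simp_all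
  then show False
    using min_period_pos[OF ex0] prime_gt_1_nat[OF assms(1)] by simp
qed

lemma min_period_power:
  fixes g t :: "int poly"
  assumes "prime p" "content g = 1" "N \<ge> 2"
    and "\<And>j. \<exists>P > 0. eventual_period (ideal2 (of_nat p ^ (N + j)) g) t P"
    and "min_period (ideal2 (of_nat p ^ (N + 1)) g) t = p * min_period (ideal2 (of_nat p ^ N) g) t"
  shows "min_period (ideal2 (of_nat p ^ (N + j)) g) t = p ^ j * min_period (ideal2 (of_nat p ^ N) g) t"
proof -
  let ?Q = "\<lambda>j. min_period (ideal2 (of_nat p ^ j) g) t"
  have step: "?Q (N + j + 1) = p * ?Q (N + j)" for j
  proof (induction j)
    case 0
    then show ?case using assms(5) by simp
  next
    case (Suc j)
    have "\<exists>P > 0. eventual_period (ideal2 (of_nat p ^ (N + j + 2)) g) t P"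
      using assms(4)[of "j + 2"] by (simp only: add.assoc)
    then have "?Q (N + j + 2) = p * ?Q (N + j + 1)"
      using min_period_Suc_Suc[OF assms(1,2) _ _ Suc] assms(3) by simp
    then show ?case by (simp add: add.assoc)
  qed
  show ?thesis
  proof (induction j)
    case (Suc j)
    have "N + Suc j = N + j + 1" by simp
    then show ?case using step[of j] Suc.IH by (metis mult.assoc power_Suc)
  qed simp
qed

section \<open>Vectors as polynomials modulo x^n - 1\<close>

definition vec_poly :: "nat \<Rightarrow> (nat \<Rightarrow> int) \<Rightarrow> int poly" where
  "vec_poly n a = (\<Sum>i<n. monom (a i) i)"

definition T_poly :: "nat \<Rightarrow> int poly" where
  "T_poly n = 1 + monom 1 (n - 1)"

definition cyc_shift :: "nat \<Rightarrow> (nat \<Rightarrow> int) \<Rightarrow> (nat \<Rightarrow> int)" where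
  "cyc_shift n a = (\<lambda>i. a (Suc i mod n))"

lemma coeff_vec_poly: "coeff (vec_poly n a) j = (if j < n then a j else 0)"
  unfolding vec_poly_def by (simp add: coeff_sum coeff_monom)

lemma vec_poly_rotate:
  assumes "n > 0"
  shows "vec_poly n a = pCons 0 (vec_poly n (cyc_shift n a)) - [:a 0:] * (monom 1 n - 1)"
  using assms
  by (auto simp: poly_eq_iff coeff_vec_poly cyc_shift_def coeff_pCons coeff_monom split: nat.split)

lemma T_poly_mult_vec_poly:
  assumes "n > 0"
  shows "T_poly n * vec_poly n a = vec_poly n a + vec_poly n (cyc_shift n a)
    + (monom 1 n - 1) * (vec_poly n (cyc_shift n a) - [:a 0:] * monom 1 (n - 1))"
proof -
  define r where "r = vec_poly n (cyc_shift n a)"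
  have shift: "monom 1 (n - 1) * pCons 0 r = monom 1 n * r"
    using assms(1) by (auto simp: poly_eq_iff coeff_monom_mult coeff_pCons split: nat.split)
  have "T_poly n * vec_poly n a = vec_poly n a + monom 1 (n - 1) * vec_poly n a"
    by (simp add: T_poly_def algebra_simps)
  also have "monom 1 (n - 1) * vec_poly n a
      = monom 1 (n - 1) * pCons 0 r - monom 1 (n - 1) * ([:a 0:] * (monom 1 n - 1))"
    by (subst vec_poly_rotate[OF assms(1)]) (simp only: r_def right_diff_distrib)
  also have "\<dots> = monom 1 n * r - [:a 0:] * monom 1 (n - 1) * (monom 1 n - 1)"
    by (simp only: shift mult.assoc mult.left_commute[of "monom 1 (n - 1)"])
  finally show ?thesis
    by (simp add: r_def[symmetric] algebra_simps)
qed

lemma vec_poly_Tmap: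
  assumes "n > 0"
  shows "vec_poly n (Tmap m n a) - T_poly n * vec_poly n a \<in> ideal2 (of_nat m) (monom 1 n - 1)"
proof -
  define c where "c i = a i + cyc_shift n a i" for i
  have "vec_poly n (Tmap m n a) - (vec_poly n a + vec_poly n (cyc_shift n a))
      = of_nat m * vec_poly n (\<lambda>i. - (c i div int m))"
  proof (rule poly_eqI)
    fix j
    have "c j mod int m - c j = int m * - (c j div int m)"
      using div_mult_mod_eq[of "c j" "int m"] by (simp add: algebra_simps)
    then show "coeff (vec_poly n (Tmap m n a) - (vec_poly n a + vec_poly n (cyc_shift n a))) j
        = coeff (of_nat m * vec_poly n (\<lambda>i. - (c i div int m))) j"
      by (simp add: coeff_vec_poly Tmap_def c_def cyc_shift_def of_nat_poly)
  qed
  then have "vec_poly n (Tmap m n a) - T_poly n * vec_poly n a = of_nat m * vec_poly n (\<lambda>i. - (c i div int m))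
      - (monom 1 n - 1) * (vec_poly n (cyc_shift n a) - [:a 0:] * monom 1 (n - 1))"
    unfolding T_poly_mult_vec_poly[OF assms] by (simp add: algebra_simps)
  then show ?thesis
    by (simp add: ideal2_diff ideal2_left_multiple ideal2_right_multiple)
qed

lemma vec_poly_funpow_Tmap:
  assumes "n > 0"
  shows "vec_poly n ((Tmap m n ^^ k) a) - T_poly n ^ k * vec_poly n a \<in> ideal2 (of_nat m) (monom 1 n - 1)"
proof (induction k)
  case (Suc k)
  let ?b = "(Tmap m n ^^ k) a"
  have "vec_poly n ((Tmap m n ^^ Suc k) a) - T_poly n ^ Suc k * vec_poly n a
      = (vec_poly n (Tmap m n ?b) - T_poly n * vec_poly n ?b)
        + T_poly n * (vec_poly n ?b - T_poly n ^ k * vec_poly n a)"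
    by (simp add: algebra_simps)
  then show ?case
    by (metis ideal2_add vec_poly_Tmap[OF assms] ideal2_mult_left[OF Suc.IH])
qed simp

lemma vec_poly_cong_imp_eq:
  assumes "n > 0" "a \<in> Zvecs m n" "b \<in> Zvecs m n"
    and "vec_poly n a - vec_poly n b \<in> ideal2 (of_nat m) (monom 1 n - 1)"
  shows "a = b"
proof -
  let ?g = "monom 1 n - 1 :: int poly"
  have coeff_g: "coeff ?g j = (if j = n then 1 else if j = 0 then -1 else 0)" for j
    using assms(1) by (simp add: coeff_monom)
  have deg_g: "degree ?g = n"
  proof (rule le_antisym)
    show "degree ?g \<le> n" by (rule degree_le) (simp add: coeff_g)
    show "n \<le> degree ?g" by (rule le_degree) (simp add: coeff_g assms(1))
  qed
  obtain u v where uv: "vec_poly n a - vec_poly n b = of_nat m * u + ?g * v"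
    using assms(4) unfolding ideal2_iff by blast
  obtain q r where qr: "pseudo_divmod u ?g = (q, r)"
    by force
  have g0: "?g \<noteq> 0" using deg_g assms(1) by auto
  \<comment> \<open>x^n - 1 is monic, so pseudo-division by it is division with remainder\<close>
  have u: "u = ?g * q + r"
    using pseudo_divmod(1)[OF g0 qr] assms(1) by (simp add: deg_g coeff_g)
  have r: "coeff r j = 0" if "j \<ge> n" for j
    using pseudo_divmod(2)[OF g0 qr] that by (auto simp: deg_g coeff_eq_0)
  define f where "f = vec_poly n a - vec_poly n b - of_nat m * r"
  define w where "w = v + of_nat m * q"
  have f_g: "f = ?g * w"
    by (simp add: f_def w_def uv u algebra_simps)
  have f_high: "coeff f j = 0" if "j \<ge> n" for j
    using that r by (simp add: f_def coeff_vec_poly of_nat_poly)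
  have "w = 0"
  proof (rule ccontr)
    assume "w \<noteq> 0"
    then have "coeff f (degree ?g + degree w) \<noteq> 0"
      unfolding f_g coeff_mult_degree_sum using assms(1) by (simp add: deg_g coeff_g)
    then show False using f_high deg_g by simp
  qed
  then have f0: "f = 0" using f_g by simp
  show "a = b"
  proof
    fix i
    show "a i = b i"
    proof (cases "i < n")
      case True
      have "a i - b i = int m * coeff r i"
        using arg_cong[OF f0, of "\<lambda>f. coeff f i"] True
        by (simp add: f_def coeff_vec_poly of_nat_poly)
      then have "a i mod int m = b i mod int m"
        by (simp add: mod_eq_dvd_iff)
      moreover have "a i \<in> {0..<int m}" "b i \<in> {0..<int m}"
        using assms(2,3) True unfolding Zvecs_def by auto
      ultimately show ?thesis by simp
    next
      case False
      then show ?thesis using assms(2,3) unfolding Zvecs_def by auto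
    qed
  qed
qed

section \<open>The maximal cycle length\<close>

lemma finite_Zvecs: "finite (Zvecs m n)"
proof -
  let ?S = "PiE {..<n} (\<lambda>_. {0..<int m})"
  let ?ext = "\<lambda>g::nat \<Rightarrow> int. (\<lambda>i. if i < n then g i else 0)"
  have "Zvecs m n \<subseteq> ?ext ` ?S"
  proof
    fix a assume a: "a \<in> Zvecs m n"
    then have "a = ?ext (restrict a {..<n})" "restrict a {..<n} \<in> ?S"
      unfolding Zvecs_def by auto
    then show "a \<in> ?ext ` ?S" by blast
  qed
  moreover have "finite (?ext ` ?S)"
    by (intro finite_imageI finite_PiE) auto
  ultimately show ?thesis by (rule finite_subset)
qed

lemma Tmap_in_Zvecs: "m > 0 \<Longrightarrow> Tmap m n a \<in> Zvecs m n"
  by (simp add: Tmap_def Zvecs_def)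

lemma funpow_Tmap_in_Zvecs: "m > 0 \<Longrightarrow> a \<in> Zvecs m n \<Longrightarrow> (Tmap m n ^^ k) a \<in> Zvecs m n"
  by (induction k) (auto simp: Tmap_in_Zvecs)

lemma funpow_eventually_periodic:
  assumes "finite S" "f ` S \<subseteq> S" "x \<in> S"
  shows "\<exists>P > 0. \<exists>N. \<forall>k \<ge> N. (f ^^ (k + P)) x = (f ^^ k) x"
proof -
  have "range (\<lambda>k. (f ^^ k) x) \<subseteq> S"
  proof -
    have "(f ^^ k) x \<in> S" for k
      using assms(2,3) by (induction k) auto
    then show ?thesis by blast
  qed
  then have "\<not> inj (\<lambda>k. (f ^^ k) x)"
    using assms(1) finite_subset finite_imageD infinite_UNIV_nat by blast
  then obtain i j where ij: "i < j" "(f ^^ i) x = (f ^^ j) x"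
    unfolding inj_def by (metis linorder_neqE_nat)
  have "(f ^^ (k + (j - i))) x = (f ^^ k) x" if "k \<ge> i" for k
  proof -
    have "k + (j - i) = (k - i) + j" "k = (k - i) + i"
      using that ij(1) by simp_all
    then have "(f ^^ (k + (j - i))) x = (f ^^ (k - i)) ((f ^^ j) x)"
      "(f ^^ k) x = (f ^^ (k - i)) ((f ^^ i) x)"
      by (metis funpow_add comp_apply)+
    then show ?thesis using ij(2) by simp
  qed
  then show ?thesis using ij(1) by (intro exI[of _ "j - i"]) auto
qed

definition basis0 :: "nat \<Rightarrow> int" where
  "basis0 = (\<lambda>i. if i = 0 then 1 else 0)"

lemma basis0_in_Zvecs: "m \<ge> 2 \<Longrightarrow> n > 0 \<Longrightarrow> basis0 \<in> Zvecs m n"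
  unfolding basis0_def Zvecs_def by auto

lemma vec_poly_basis0: "n > 0 \<Longrightarrow> vec_poly n basis0 = 1"
  by (auto simp: poly_eq_iff coeff_vec_poly basis0_def)

lemma eventual_period_imp_orbit_periodic:
  assumes "n > 0" "m > 0" "a \<in> Zvecs m n"
    and "eventual_period (ideal2 (of_nat m) (monom 1 n - 1)) (T_poly n) P"
  shows "\<exists>N. \<forall>k \<ge> N. (Tmap m n ^^ (k + P)) a = (Tmap m n ^^ k) a"
proof -
  let ?I = "ideal2 (of_nat m) (monom 1 n - 1)" and ?t = "T_poly n" and ?T = "Tmap m n"
  obtain N where N: "\<And>k. k \<ge> N \<Longrightarrow> ?t ^ k * (?t ^ P - 1) \<in> ?I"
    using eventual_period_from[OF assms(4)] by blast
  have "(?T ^^ (k + P)) a = (?T ^^ k) a" if "k \<ge> N" for k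
  proof (rule vec_poly_cong_imp_eq[OF assms(1) funpow_Tmap_in_Zvecs[OF assms(2,3)]
        funpow_Tmap_in_Zvecs[OF assms(2,3)]])
    have "vec_poly n ((?T ^^ (k + P)) a) - vec_poly n ((?T ^^ k) a)
        = (vec_poly n ((?T ^^ (k + P)) a) - ?t ^ (k + P) * vec_poly n a)
          - (vec_poly n ((?T ^^ k) a) - ?t ^ k * vec_poly n a)
          + vec_poly n a * (?t ^ k * (?t ^ P - 1))"
      by (simp add: algebra_simps power_add)
    then show "vec_poly n ((?T ^^ (k + P)) a) - vec_poly n ((?T ^^ k) a) \<in> ?I"
      by (metis ideal2_add ideal2_diff ideal2_mult_left vec_poly_funpow_Tmap[OF assms(1)] N[OF that])
  qed
  then show ?thesis by blast
qed

lemma orbit_periodic_imp_eventual_period: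
  assumes "n > 0" "\<exists>N. \<forall>k \<ge> N. (Tmap m n ^^ (k + P)) basis0 = (Tmap m n ^^ k) basis0"
  shows "eventual_period (ideal2 (of_nat m) (monom 1 n - 1)) (T_poly n) P"
proof -
  let ?t = "T_poly n" and ?T = "Tmap m n"
  obtain N where N: "(?T ^^ (N + P)) basis0 = (?T ^^ N) basis0"
    using assms(2) by blast
  have "?t ^ N * (?t ^ P - 1)
      = (vec_poly n ((?T ^^ N) basis0) - ?t ^ N * vec_poly n basis0)
        - (vec_poly n ((?T ^^ (N + P)) basis0) - ?t ^ (N + P) * vec_poly n basis0)"
    by (simp add: N vec_poly_basis0[OF assms(1)] algebra_simps power_add)
  then show ?thesis
    unfolding eventual_period_def by (metis ideal2_diff vec_poly_funpow_Tmap[OF assms(1)])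
qed

lemma
  assumes "m \<ge> 2" "n > 0"
  shows ex_eventual_period_T_poly:
      "\<exists>P > 0. eventual_period (ideal2 (of_nat m) (monom 1 n - 1)) (T_poly n) P"
    and Pmax_eq_min_period: "Pmax m n = min_period (ideal2 (of_nat m) (monom 1 n - 1)) (T_poly n)"
proof -
  let ?I = "ideal2 (of_nat m) (monom 1 n - 1)"
  have m: "m > 0" using assms(1) by simp
  have basis0: "basis0 \<in> Zvecs m n" using basis0_in_Zvecs[OF assms] .
  have orbit_iff: "(\<exists>N. \<forall>k \<ge> N. (Tmap m n ^^ (k + P)) basis0 = (Tmap m n ^^ k) basis0)
      \<longleftrightarrow> eventual_period ?I (T_poly n) P" for P
    using orbit_periodic_imp_eventual_period[OF assms(2)]
      eventual_period_imp_orbit_periodic[OF assms(2) m basis0] by blast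
  show ex: "\<exists>P > 0. eventual_period ?I (T_poly n) P"
    using funpow_eventually_periodic[OF finite_Zvecs _ basis0] Tmap_in_Zvecs[OF m] orbit_iff by blast
  let ?L = "min_period ?I (T_poly n)"
  have L: "?L > 0" "eventual_period ?I (T_poly n) ?L"
    using min_period_pos[OF ex] eventual_period_iff_min_period_dvd[OF ex] by auto
  have "cycle_len m n basis0 = ?L"
    unfolding cycle_len_def min_period_def orbit_iff ..
  moreover have "cycle_len m n a \<le> ?L" if "a \<in> Zvecs m n" for a
    unfolding cycle_len_def
    by (rule Least_le) (use L eventual_period_imp_orbit_periodic[OF assms(2) m that] in blast)
  ultimately show "Pmax m n = ?L"
    unfolding Pmax_def using finite_Zvecs basis0 by (intro Max_eqI) force+
qed

lemma content_monom_minus_1: "n > 0 \<Longrightarrow> content (monom 1 n - 1 :: int poly) = 1"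
proof -
  assume "n > 0"
  then have "content (monom 1 n - 1 :: int poly) dvd -1"
    using content_dvd_coeff[of "monom 1 n - 1 :: int poly" 0] by simp
  then show ?thesis
    using normalize_content[of "monom 1 n - 1 :: int poly"] by (simp add: zdvd1_eq)
qed

lemma
  assumes "prime p" "n > 0" "k > 0"
  shows ex_eventual_period_prime_power:
      "\<exists>P > 0. eventual_period (ideal2 (of_nat p ^ k) (monom 1 n - 1)) (T_poly n) P"
    and Pmax_prime_power: "Pmax (p ^ k) n = min_period (ideal2 (of_nat p ^ k) (monom 1 n - 1)) (T_poly n)"
proof -
  have "p ^ 1 \<le> p ^ k"
    using assms(3) prime_gt_0_nat[OF assms(1)] by (intro power_increasing) auto
  then have "p ^ k \<ge> 2"
    using prime_ge_2_nat[OF assms(1)] by simp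
  then show "\<exists>P > 0. eventual_period (ideal2 (of_nat p ^ k) (monom 1 n - 1)) (T_poly n) P"
    and "Pmax (p ^ k) n = min_period (ideal2 (of_nat p ^ k) (monom 1 n - 1)) (T_poly n)"
    using ex_eventual_period_T_poly[of "p ^ k" n] Pmax_eq_min_period[of "p ^ k" n] assms(2)
    by (simp_all only: of_nat_power)
qed

theorem theorem5p1:
  fixes p n :: nat
  assumes "prime p" and "n > 0"
  shows "(\<forall>k>0. Pmax (p^(k+1)) n = Pmax (p^k) n \<or> Pmax (p^(k+1)) n = p * Pmax (p^k) n)
       \<and> (\<forall>k\<ge>2. Pmax (p^(k+1)) n = p * Pmax (p^k) n \<longrightarrow> Pmax (p^(k+2)) n = p * Pmax (p^(k+1)) n)
       \<and> (\<forall>N\<ge>2. Pmax (p^(N+1)) n = p * Pmax (p^N) n \<longrightarrow>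
            (\<forall>k>0. Pmax (p^(N+k)) n = p^k * Pmax (p^N) n))"
proof -
  let ?Q = "\<lambda>k. min_period (ideal2 (of_nat p ^ k) (monom 1 n - 1)) (T_poly n)"
  note content = content_monom_minus_1[OF assms(2)]
  note ex = ex_eventual_period_prime_power[OF assms]
  have P: "Pmax (p ^ (k + j)) n = ?Q (k + j)" if "k > 0" for k j
    using Pmax_prime_power[OF assms] that by simp
  show ?thesis
  proof (intro conjI allI impI)
    fix k :: nat assume k: "k > 0"
    have "?Q (k + 1) = ?Q k \<or> ?Q (k + 1) = p * ?Q k"
      by (rule min_period_Suc_cases[OF assms(1) _ ex]) (use k in simp_all)
    then show "Pmax (p^(k+1)) n = Pmax (p^k) n \<or> Pmax (p^(k+1)) n = p * Pmax (p^k) n"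
      using P[OF k, of 0] P[OF k, of 1] by simp
  next
    fix k :: nat assume k: "k \<ge> 2" and "Pmax (p^(k+1)) n = p * Pmax (p^k) n"
    then have "?Q (k + 2) = p * ?Q (k + 1)"
      using min_period_Suc_Suc[OF assms(1) content k ex] P[of k 0] P[of k 1] by simp
    then show "Pmax (p^(k+2)) n = p * Pmax (p^(k+1)) n"
      using k P[of k 1] P[of k 2] by simp
  next
    fix N k :: nat assume N: "N \<ge> 2" and "Pmax (p^(N+1)) n = p * Pmax (p^N) n"
    then have "?Q (N + k) = p ^ k * ?Q N"
      using min_period_power[OF assms(1) content N ex] P[of N 0] P[of N 1] by simp
    then show "Pmax (p^(N+k)) n = p^k * Pmax (p^N) n"
      using N P[of N k] P[of N 0] by simp
  qed
qed

end
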